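(* Let $p$ be a prime, $a,b\in\mathbb{Z}_p$, and $Q=Q_{a,b}(\mathbb{Z}_p)$. Then: (i) if $(a,b)=(0,0)$ and $p\ne3$, $Q$ has exponent $p$; (ii) if $(a,b)\ne(0,0)$ or $p=3$, $Q$ has exponent $p^2$; (iii) if $a=0$, then $N_\mu(Q)\cong\mathbb{Z}_p\times\mathbb{Z}_p$; (iv) if $a\ne0$, then $N_\mu(Q)\cong\mathbb{Z}_{p^2}$.
   Context: Identify $\mathbb{Z}_p$ with $\{0,\dots,p-1\}$. The overflow indicator is $(x,y)_p=1$ if $x+y\ge p$ as integers and $0$ otherwise. $Q_{a,b}(\mathbb{Z}_p)$ is $\mathbb{Z}_p^3$ with multiplication $(x_1,x_2,x_3)(y_1,y_2,y_3)=(x_1+y_1+(x_2+y_2)x_3y_3+a(x_2,y_2)_p+b(x_3,y_3)_p,\ x_2+y_2,\ x_3+y_3)$, a power-associative commutative loop. The exponent is the least $e\ge1$ with $u^e$ equal to the neutral element for all $u$. $N_\mu(Q)=\{y:(xy)z=x(yz)\ \forall x,z\}$, which here is a group. *)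

theory Defs
  imports "HOL-Algebra.Elementary_Groups" "HOL-Computational_Algebra.Primes"
begin

text \<open>Z_p is identified with {0,...,p-1} (natural numbers below p).\<close>

definition ovf :: "nat \<Rightarrow> nat \<Rightarrow> nat \<Rightarrow> nat" where
  "ovf p x y = (if x + y \<ge> p then 1 else 0)"

definition Qcar :: "nat \<Rightarrow> (nat \<times> nat \<times> nat) set" where
  "Qcar p = {(x1, x2, x3). x1 < p \<and> x2 < p \<and> x3 < p}"

definition Qmult :: "nat \<Rightarrow> nat \<Rightarrow> nat \<Rightarrow> nat \<times> nat \<times> nat \<Rightarrow> nat \<times> nat \<times> nat \<Rightarrow> nat \<times> nat \<times> nat" where
  "Qmult p a b x y = (case x of (x1, x2, x3) \<Rightarrow> case y of (y1, y2, y3) \<Rightarrow>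
     ((x1 + y1 + (x2 + y2) * x3 * y3 + a * ovf p x2 y2 + b * ovf p x3 y3) mod p,
      (x2 + y2) mod p, (x3 + y3) mod p))"

definition Qone :: "nat \<times> nat \<times> nat" where
  "Qone = (0, 0, 0)"

text \<open>Powers u^n = (...((1*u)*u)...)*u (the loop is power-associative).\<close>
primrec Qpow :: "nat \<Rightarrow> nat \<Rightarrow> nat \<Rightarrow> nat \<times> nat \<times> nat \<Rightarrow> nat \<Rightarrow> nat \<times> nat \<times> nat" where
  "Qpow p a b u 0 = Qone"
| "Qpow p a b u (Suc n) = Qmult p a b (Qpow p a b u n) u"

definition Qexponent :: "nat \<Rightarrow> nat \<Rightarrow> nat \<Rightarrow> nat" where
  "Qexponent p a b = (LEAST e. e \<ge> 1 \<and> (\<forall>u \<in> Qcar p. Qpow p a b u e = Qone))"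

definition Nmu :: "nat \<Rightarrow> nat \<Rightarrow> nat \<Rightarrow> (nat \<times> nat \<times> nat) set" where
  "Nmu p a b = {y \<in> Qcar p. \<forall>x \<in> Qcar p. \<forall>z \<in> Qcar p.
      Qmult p a b (Qmult p a b x y) z = Qmult p a b x (Qmult p a b y z)}"

definition Nmu_group :: "nat \<Rightarrow> nat \<Rightarrow> nat \<Rightarrow> (nat \<times> nat \<times> nat) monoid" where
  "Nmu_group p a b = \<lparr>carrier = Nmu p a b, monoid.mult = Qmult p a b, one = Qone\<rparr>"

end

theory Submission
  imports Defs "HOL-Number_Theory.Cong"
begin

(* First, the n-th power of
   u = (u1,u2,u3) has the closed form
     u^n = (n u1 + u2 u3^2 S(n) + a [n u2 / p] + b [n u3 / p],  n u2,  n u3)  (mod p),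
   where S(n) = sum_{k<n} k(k+1) satisfies 3 S(n) + n = n^3.  Testing this on
   (0,1,0), (0,0,1), (0,1,1) shows that u^e = 1 for all u iff p | e, p | a(e/p),
   p | b(e/p) and p | S(e); the exponent is then read off from elementary
   divisibility facts about S.  Second, the middle nucleus consists exactly of
   the elements (x1,x2,0), on which the product is
     (x1 + y1 + a [(x2 + y2)/p], x2 + y2, 0)  (mod p),
   i.e. an extension of Z_p by Z_p with carry cocycle a.  For a = 0 it is
   Z_p x Z_p; for a <> 0 the map n = n1 p + n0 |-> (a n1, n0, 0) embeds
   Z_{p^2} into it, and both isomorphisms follow from injectivity and a
   cardinality count. *)

lemma ovf_eq_carry:
  assumes "x < p" "y < p"
  shows "ovf p x y = (x + y) div p"
proof (cases "p \<le> x + y")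
  case True
  then have "(x + y) div p = 1" using assms by (intro div_nat_eqI) auto
  then show ?thesis using True by (simp add: ovf_def)
qed (simp add: ovf_def)

lemma ovf_carry_sum:
  assumes "x < p" "y < p" "z < p"
  shows "ovf p x y + ovf p ((x + y) mod p) z = (x + y + z) div p"
  using assms div_add1_eq[of "x + y" z p] by (simp add: ovf_eq_carry)

(* S(n) = sum of k(k+1) for k < n, the coefficient of u2 u3^2 in u^n. *)
definition pronic_sum :: "nat \<Rightarrow> nat" where
  "pronic_sum n = (\<Sum>k<n. k * (k + 1))"

lemma pronic_sum_Suc: "pronic_sum (Suc n) = pronic_sum n + n * (n + 1)"
  by (simp add: pronic_sum_def)

lemma pronic_sum_cube: "3 * pronic_sum n + n = n ^ 3"
  by (induction n) (simp_all add: pronic_sum_Suc pronic_sum_def power3_eq_cube algebra_simps)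

(* S(3k) + k = 9 k^3, so 3 divides S(3k) exactly when 3 divides k. *)
lemma three_dvd_pronic_sum_iff: "3 dvd pronic_sum (3 * k) \<longleftrightarrow> 3 dvd k"
proof -
  have "pronic_sum (3 * k) + k = 3 * (3 * k ^ 3)"
    using pronic_sum_cube[of "3 * k"] by (simp add: power_mult_distrib)
  then have "3 dvd pronic_sum (3 * k) + k" by simp
  then show ?thesis using dvd_add_right_iff dvd_add_left_iff by blast
qed

lemma prime_dvd_pronic_sum:
  fixes p m :: nat
  assumes p: "prime p" and "p dvd m" and "p \<noteq> 3 \<or> p\<^sup>2 dvd m"
  shows "p dvd pronic_sum m"
proof (cases "p = 3")
  case True
  then obtain k where "m = 3 * (3 * k)"
    using assms(3) by (auto simp: power2_eq_square)
  then show ?thesis using True three_dvd_pronic_sum_iff[of "3 * k"] by simp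
next
  case False
  have "p dvd 3 * pronic_sum m + m"
    using \<open>p dvd m\<close> by (simp add: pronic_sum_cube power3_eq_cube)
  then have "p dvd 3 * pronic_sum m"
    using \<open>p dvd m\<close> by (simp add: dvd_add_left_iff)
  moreover have "\<not> p dvd 3"
    using p False primes_dvd_imp_eq[of p 3] by auto
  ultimately show ?thesis using p by (simp add: prime_dvd_mult_iff)
qed

lemma Qpow_formula:
  assumes p: "0 < p" and u: "u2 < p" "u3 < p"
  shows "Qpow p a b (u1, u2, u3) n =
    ((n * u1 + u2 * u3 * u3 * pronic_sum n + a * (n * u2 div p) + b * (n * u3 div p)) mod p,
     n * u2 mod p, n * u3 mod p)"
proof (induction n)
  case 0
  then show ?case by (simp add: Qone_def pronic_sum_def)
next
  case (Suc n)
  define A where "A = n * u1 + u2 * u3 * u3 * pronic_sum n + a * (n * u2 div p) + b * (n * u3 div p)"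
  define c2 where "c2 = (n * u2 mod p + u2) div p"
  define c3 where "c3 = (n * u3 mod p + u3) div p"
  have carry: "ovf p (n * u2 mod p) u2 = c2" "ovf p (n * u3 mod p) u3 = c3"
    using p u by (simp_all add: ovf_eq_carry c2_def c3_def)
  have div: "Suc n * u2 div p = n * u2 div p + c2" "Suc n * u3 div p = n * u3 div p + c3"
    using u div_add1_eq[of "n * u2" u2 p] div_add1_eq[of "n * u3" u3 p]
    by (simp_all add: c2_def c3_def add.commute)
  have "[A mod p + u1 + (n * u2 mod p + u2) * (n * u3 mod p) * u3 + a * c2 + b * c3
      = A + u1 + (n * u2 + u2) * (n * u3) * u3 + a * c2 + b * c3] (mod p)"
    by (intro cong_add cong_mult cong_refl) (simp_all add: cong_def)
  also have "A + u1 + (n * u2 + u2) * (n * u3) * u3 + a * c2 + b * c3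
      = Suc n * u1 + u2 * u3 * u3 * pronic_sum (Suc n) + a * (Suc n * u2 div p) + b * (Suc n * u3 div p)"
    unfolding A_def div pronic_sum_Suc by (simp add: algebra_simps)
  finally have first: "(A mod p + u1 + (n * u2 mod p + u2) * (n * u3 mod p) * u3 + a * c2 + b * c3) mod p
      = (Suc n * u1 + u2 * u3 * u3 * pronic_sum (Suc n) + a * (Suc n * u2 div p) + b * (Suc n * u3 div p)) mod p"
    unfolding cong_def .
  have rest: "(n * u2 mod p + u2) mod p = Suc n * u2 mod p" "(n * u3 mod p + u3) mod p = Suc n * u3 mod p"
    by (simp_all add: mod_add_left_eq mod_add_right_eq add.commute)
  have "Qpow p a b (u1, u2, u3) (Suc n) = ((A mod p + u1 + (n * u2 mod p + u2) * (n * u3 mod p) * u3 + a * c2 + b * c3) mod p,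
      (n * u2 mod p + u2) mod p, (n * u3 mod p + u3) mod p)"
    by (simp add: Suc.IH A_def Qmult_def carry)
  then show ?case unfolding first rest .
qed

definition annihilates :: "nat \<Rightarrow> nat \<Rightarrow> nat \<Rightarrow> nat \<Rightarrow> bool" where
  "annihilates p a b e \<longleftrightarrow> (\<forall>u \<in> Qcar p. Qpow p a b u e = Qone)"

(* Arithmetic characterisation of the annihilating exponents; necessity comes
   from the test elements (0,1,0), (0,0,1) and (0,1,1). *)
lemma annihilates_iff:
  assumes p: "1 < p"
  shows "annihilates p a b e \<longleftrightarrow>
    p dvd e \<and> p dvd a * (e div p) \<and> p dvd b * (e div p) \<and> p dvd pronic_sum e"
proof
  assume ann: "annihilates p a b e"
  have test: "(0, 1, 0) \<in> Qcar p" "(0, 0, 1) \<in> Qcar p" "(0, 1, 1) \<in> Qcar p"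
    using p by (auto simp: Qcar_def)
  have "Qpow p a b (0, 1, 0) e = Qone" "Qpow p a b (0, 0, 1) e = Qone" "Qpow p a b (0, 1, 1) e = Qone"
    using ann test by (auto simp: annihilates_def)
  then have e: "p dvd e" and ak: "p dvd a * (e div p)" and bk: "p dvd b * (e div p)"
    and sum: "p dvd pronic_sum e + a * (e div p) + b * (e div p)"
    using p by (simp_all add: Qpow_formula Qone_def mod_eq_0_iff_dvd)
  from sum ak bk have "p dvd pronic_sum e" by (simp add: dvd_add_left_iff)
  with e ak bk show "p dvd e \<and> p dvd a * (e div p) \<and> p dvd b * (e div p) \<and> p dvd pronic_sum e"
    by blast
next
  assume "p dvd e \<and> p dvd a * (e div p) \<and> p dvd b * (e div p) \<and> p dvd pronic_sum e"
  then obtain k where e: "e = p * k" and ak: "p dvd a * k" and bk: "p dvd b * k"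
    and sum: "p dvd pronic_sum e" using p by auto
  show "annihilates p a b e"
    unfolding annihilates_def
  proof
    fix u assume "u \<in> Qcar p"
    then obtain u1 u2 u3 where u: "u = (u1, u2, u3)" "u2 < p" "u3 < p"
      by (auto simp: Qcar_def)
    have "p dvd e * u1 + u2 * u3 * u3 * pronic_sum e + a * (k * u2) + b * (k * u3)"
      using e ak bk sum by (simp add: mult.assoc[symmetric] mult.commute[of _ k])
    then show "Qpow p a b u e = Qone"
      using p u e by (simp add: Qpow_formula Qone_def mult.assoc)
  qed
qed

lemma Qexponent_eqI:
  assumes "1 \<le> e" "annihilates p a b e"
    and "\<And>e'. 1 \<le> e' \<Longrightarrow> annihilates p a b e' \<Longrightarrow> e dvd e'"
  shows "Qexponent p a b = e"
  unfolding Qexponent_def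
proof (rule Least_equality)
  show "1 \<le> e \<and> (\<forall>u\<in>Qcar p. Qpow p a b u e = Qone)"
    using assms(1,2) by (simp add: annihilates_def)
  show "e \<le> e'" if "1 \<le> e' \<and> (\<forall>u\<in>Qcar p. Qpow p a b u e' = Qone)" for e'
    using that assms(3)[of e'] by (auto simp: annihilates_def intro: dvd_imp_le)
qed

lemma Qexponent_eq_p:
  assumes p: "prime p" and "p \<noteq> 3"
  shows "Qexponent p 0 0 = p"
proof -
  have "annihilates p 0 0 e \<longleftrightarrow> p dvd e" for e
    using assms prime_dvd_pronic_sum[of p e] annihilates_iff[OF prime_gt_1_nat[OF p]] by auto
  then show ?thesis
    using prime_gt_1_nat[OF p] by (intro Qexponent_eqI) auto
qed

lemma Qexponent_eq_p_squared:
  assumes p: "prime p" and "a < p" "b < p" and nontrivial: "a \<noteq> 0 \<or> b \<noteq> 0 \<or> p = 3"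
  shows "Qexponent p a b = p\<^sup>2"
proof (rule Qexponent_eqI)
  have p1: "1 < p" using p prime_gt_1_nat by blast
  then show "1 \<le> p\<^sup>2" by simp
  show "annihilates p a b (p\<^sup>2)"
    using p1 prime_dvd_pronic_sum[OF p, of "p\<^sup>2"] by (simp add: annihilates_iff power2_eq_square)
  fix e assume "annihilates p a b e"
  then obtain k where e: "e = p * k" and ak: "p dvd a * k" and bk: "p dvd b * k"
    and sum: "p dvd pronic_sum (p * k)"
    using p1 by (auto simp: annihilates_iff)
  have "p dvd k"
  proof (rule ccontr)
    assume k: "\<not> p dvd k"
    have "a = 0" "b = 0"
      using ak bk k p \<open>a < p\<close> \<open>b < p\<close> by (auto simp: prime_dvd_mult_iff dest: dvd_imp_le)
    then have "p = 3" using nontrivial by simp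
    then show False using sum k three_dvd_pronic_sum_iff by simp
  qed
  then show "p\<^sup>2 dvd e" using e by (simp add: power2_eq_square)
qed

lemma ovf_commute: "ovf p x y = ovf p y x"
  by (simp add: ovf_def add.commute)

lemma ovf_zero: "x < p \<Longrightarrow> ovf p x 0 = 0" "x < p \<Longrightarrow> ovf p 0 x = 0"
  by (simp_all add: ovf_def)

(* Elements with vanishing third coordinate associate with everything: the
   carries of x2 + y2 + z2 agree in both bracketings. *)
lemma Qmult_assoc_flat:
  assumes p: "0 < p" and x: "(x1, x2, x3) \<in> Qcar p" and y: "y1 < p" "y2 < p"
    and z: "(z1, z2, z3) \<in> Qcar p"
  shows "Qmult p a b (Qmult p a b (x1, x2, x3) (y1, y2, 0)) (z1, z2, z3)
       = Qmult p a b (x1, x2, x3) (Qmult p a b (y1, y2, 0) (z1, z2, z3))"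
proof -
  have bounds: "x2 < p" "x3 < p" "z2 < p" "z3 < p" using x z by (auto simp: Qcar_def)
  have carry_left: "ovf p x2 y2 + ovf p ((x2 + y2) mod p) z2 = (x2 + y2 + z2) div p"
    using bounds y by (simp add: ovf_carry_sum)
  have carry_right: "ovf p y2 z2 + ovf p x2 ((y2 + z2) mod p) = (x2 + y2 + z2) div p"
    using bounds y ovf_carry_sum[of y2 p z2 x2] by (simp add: ovf_commute add.commute add.left_commute)
  define X where "X = x1 + y1 + z1 + (x2 + y2 + z2) * x3 * z3 + a * ((x2 + y2 + z2) div p) + b * ovf p x3 z3"
  have left: "[(x1 + y1 + a * ovf p x2 y2) mod p + z1 + ((x2 + y2) mod p + z2) * x3 * z3
         + a * ovf p ((x2 + y2) mod p) z2 + b * ovf p x3 z3 = X] (mod p)"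
  proof -
    have "[(x1 + y1 + a * ovf p x2 y2) mod p + z1 + ((x2 + y2) mod p + z2) * x3 * z3
           + a * ovf p ((x2 + y2) mod p) z2 + b * ovf p x3 z3
         = (x1 + y1 + a * ovf p x2 y2) + z1 + ((x2 + y2) + z2) * x3 * z3
           + a * ovf p ((x2 + y2) mod p) z2 + b * ovf p x3 z3] (mod p)"
      by (intro cong_add cong_mult cong_refl) (simp_all add: cong_def)
    moreover have "(x1 + y1 + a * ovf p x2 y2) + z1 + ((x2 + y2) + z2) * x3 * z3
           + a * ovf p ((x2 + y2) mod p) z2 + b * ovf p x3 z3 = X"
      unfolding X_def carry_left[symmetric] by (simp add: algebra_simps)
    ultimately show ?thesis by simp
  qed
  have right: "[x1 + (y1 + z1 + a * ovf p y2 z2) mod p + (x2 + (y2 + z2) mod p) * x3 * z3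
         + a * ovf p x2 ((y2 + z2) mod p) + b * ovf p x3 z3 = X] (mod p)"
  proof -
    have "[x1 + (y1 + z1 + a * ovf p y2 z2) mod p + (x2 + (y2 + z2) mod p) * x3 * z3
           + a * ovf p x2 ((y2 + z2) mod p) + b * ovf p x3 z3
         = x1 + (y1 + z1 + a * ovf p y2 z2) + (x2 + (y2 + z2)) * x3 * z3
           + a * ovf p x2 ((y2 + z2) mod p) + b * ovf p x3 z3] (mod p)"
      by (intro cong_add cong_mult cong_refl) (simp_all add: cong_def)
    moreover have "x1 + (y1 + z1 + a * ovf p y2 z2) + (x2 + (y2 + z2)) * x3 * z3
           + a * ovf p x2 ((y2 + z2) mod p) + b * ovf p x3 z3 = X"
      unfolding X_def carry_right[symmetric] by (simp add: algebra_simps)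
    ultimately show ?thesis by simp
  qed
  have "((x2 + y2) mod p + z2) mod p = (x2 + (y2 + z2) mod p) mod p"
    by (simp add: mod_simps add.assoc)
  then show ?thesis
    using left right bounds y unfolding cong_def by (simp add: Qmult_def ovf_zero)
qed

lemma Qmult_nonassoc:
  assumes p: "1 < p" and y: "(y1, y2, y3) \<in> Qcar p" and "y3 \<noteq> 0"
  shows "Qmult p a b (Qmult p a b (0, 1, 0) (y1, y2, y3)) (0, 0, 1)
       \<noteq> Qmult p a b (0, 1, 0) (Qmult p a b (y1, y2, y3) (0, 0, 1))"
proof
  assume assoc: "Qmult p a b (Qmult p a b (0, 1, 0) (y1, y2, y3)) (0, 0, 1)
       = Qmult p a b (0, 1, 0) (Qmult p a b (y1, y2, y3) (0, 0, 1))"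
  have bounds: "y2 < p" "y3 < p" "(1 + y2) mod p < p" using y p by (auto simp: Qcar_def)
  define X where "X = y1 + a * ovf p 1 y2 + y2 * y3 + b * ovf p y3 1"
  have "[(y1 + a * ovf p 1 y2) mod p + ((1 + y2) mod p) * y3 + b * ovf p y3 1
       = (y1 + a * ovf p 1 y2) + (1 + y2) * y3 + b * ovf p y3 1] (mod p)"
    by (intro cong_add cong_mult cong_refl) (simp_all add: cong_def)
  then have left: "[(y1 + a * ovf p 1 y2) mod p + ((1 + y2) mod p) * y3 + b * ovf p y3 1
       = X + y3] (mod p)" by (simp add: X_def algebra_simps)
  have right: "[(y1 + y2 * y3 + b * ovf p y3 1) mod p + a * ovf p 1 y2 = X] (mod p)"
    by (simp add: X_def cong_def mod_simps algebra_simps)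
  from assoc have "((y1 + a * ovf p 1 y2) mod p + ((1 + y2) mod p) * y3 + b * ovf p y3 1) mod p
      = ((y1 + y2 * y3 + b * ovf p y3 1) mod p + a * ovf p 1 y2) mod p"
    using p bounds by (simp add: Qmult_def ovf_zero)
  with left right have "[X + y3 = X + 0] (mod p)" unfolding cong_def by simp
  then have "[y3 = 0] (mod p)" by (simp only: cong_add_lcancel_nat)
  then show False using \<open>y3 \<noteq> 0\<close> bounds by (simp add: cong_def)
qed

lemma Nmu_eq:
  assumes p: "1 < p"
  shows "Nmu p a b = {(x1, x2, 0) | x1 x2. x1 < p \<and> x2 < p}"
proof (intro Set.set_eqI iffI)
  fix y assume "y \<in> Nmu p a b"
  then obtain y1 y2 y3 where y: "y = (y1, y2, y3)" "(y1, y2, y3) \<in> Qcar p"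
    and assoc: "\<forall>x \<in> Qcar p. \<forall>z \<in> Qcar p.
       Qmult p a b (Qmult p a b x y) z = Qmult p a b x (Qmult p a b y z)"
    unfolding Nmu_def by (cases y) auto
  have "(0, 1, 0) \<in> Qcar p" "(0, 0, 1) \<in> Qcar p" using p by (auto simp: Qcar_def)
  then have "y3 = 0" using Qmult_nonassoc[OF p y(2)] assoc y(1) by blast
  then show "y \<in> {(x1, x2, 0) | x1 x2. x1 < p \<and> x2 < p}" using y by (auto simp: Qcar_def)
next
  fix y :: "nat \<times> nat \<times> nat"
  assume "y \<in> {(x1, x2, 0) | x1 x2. x1 < p \<and> x2 < p}"
  then obtain y1 y2 where y: "y = (y1, y2, 0)" "y1 < p" "y2 < p" by blast
  have "Qmult p a b (Qmult p a b x y) z = Qmult p a b x (Qmult p a b y z)"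
    if "x \<in> Qcar p" "z \<in> Qcar p" for x z
  proof -
    obtain x1 x2 x3 z1 z2 z3 where "x = (x1, x2, x3)" "z = (z1, z2, z3)"
      by (cases x, cases z) blast
    then show ?thesis
      using Qmult_assoc_flat[of p x1 x2 x3 y1 y2 z1 z2 z3 a b] that y p by simp
  qed
  then show "y \<in> Nmu p a b" using y by (simp add: Nmu_def Qcar_def)
qed

lemma Nmu_mult:
  assumes "x2 < p" "y2 < p"
  shows "Qmult p a b (x1, x2, 0) (y1, y2, 0) = ((x1 + y1 + a * ((x2 + y2) div p)) mod p, (x2 + y2) mod p, 0)"
  using assms by (simp add: Qmult_def ovf_eq_carry)

lemma card_Nmu:
  assumes "1 < p"
  shows "card (Nmu p a b) = p\<^sup>2"
proof -
  have "Nmu p a b = (\<lambda>(x1, x2). (x1, x2, 0)) ` ({..<p} \<times> {..<p})"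
    using assms by (auto simp: Nmu_eq)
  moreover have "inj_on (\<lambda>(x1, x2). (x1, x2, 0 :: nat)) ({..<p} \<times> {..<p})"
    by (auto simp: inj_on_def)
  ultimately show ?thesis by (simp add: card_image power2_eq_square)
qed

(* An injective homomorphism from a group into a finite structure of the same
   size is an isomorphism; it is stated in the orientation of the theorem. *)
lemma iso_of_injective_hom:
  assumes G: "group G" and h: "h \<in> hom G H" "inj_on h (carrier G)"
    and "finite (carrier H)" "card (carrier G) = card (carrier H)"
  shows "H \<cong> G"
proof -
  have "h ` carrier G \<subseteq> carrier H" using h by (auto simp: hom_def)
  moreover have "card (h ` carrier G) = card (carrier H)" using assms by (simp add: card_image)
  ultimately have "h ` carrier G = carrier H" using assms by (simp add: card_subset_eq)
  then have "G \<cong> H" using h by (auto simp: iso_iff intro: is_isoI)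
  then show ?thesis using group.iso_sym[OF G] by blast
qed

lemma Nmu_iso_elementary:
  assumes p: "1 < p"
  shows "Nmu_group p 0 b \<cong> integer_mod_group p \<times>\<times> integer_mod_group p"
proof (rule iso_of_injective_hom)
  define h where "h = (\<lambda>(i :: int, j :: int). (nat i, nat j, 0 :: nat))"
  show "group (integer_mod_group p \<times>\<times> integer_mod_group p)"
    by (simp add: DirProd_group)
  show "h \<in> hom (integer_mod_group p \<times>\<times> integer_mod_group p) (Nmu_group p 0 b)"
  proof (rule homI)
    fix x assume "x \<in> carrier (integer_mod_group p \<times>\<times> integer_mod_group p)"
    then show "h x \<in> carrier (Nmu_group p 0 b)"
      using p by (auto simp: carrier_integer_mod_group h_def Nmu_group_def Nmu_eq nat_less_iff)
  next
    fix x y assume "x \<in> carrier (integer_mod_group p \<times>\<times> integer_mod_group p)"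
      "y \<in> carrier (integer_mod_group p \<times>\<times> integer_mod_group p)"
    then show "h (x \<otimes>\<^bsub>integer_mod_group p \<times>\<times> integer_mod_group p\<^esub> y) = h x \<otimes>\<^bsub>Nmu_group p 0 b\<^esub> h y"
      using p by (auto simp: carrier_integer_mod_group h_def Nmu_group_def Nmu_mult nat_mod_distrib nat_add_distrib nat_less_iff)
  qed
  show "inj_on h (carrier (integer_mod_group p \<times>\<times> integer_mod_group p))"
    using p by (auto simp: carrier_integer_mod_group h_def inj_on_def)
  show "finite (carrier (Nmu_group p 0 b))"
    using card_Nmu[OF p] p by (intro card_ge_0_finite) (simp add: Nmu_group_def)
  show "card (carrier (integer_mod_group p \<times>\<times> integer_mod_group p)) = card (carrier (Nmu_group p 0 b))"
    using p by (simp add: carrier_integer_mod_group card_cartesian_product Nmu_group_def card_Nmu power2_eq_square)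
qed

definition Nmu_embed :: "nat \<Rightarrow> nat \<Rightarrow> nat \<Rightarrow> nat \<times> nat \<times> nat" where
  "Nmu_embed p a n = ((a * (n div p)) mod p, n mod p, 0)"

(* Addition mod p^2 is carried to the nucleus product: the carry of the low
   digits reappears, multiplied by a, in the first coordinate. *)
lemma Nmu_embed_add:
  assumes "0 < p"
  shows "Nmu_embed p a ((m + n) mod p\<^sup>2) = Qmult p a b (Nmu_embed p a m) (Nmu_embed p a n)"
proof -
  define c where "c = (m mod p + n mod p) div p"
  have low: "(m + n) mod p\<^sup>2 mod p = (m mod p + n mod p) mod p"
    by (simp add: power2_eq_square mod_mod_cancel mod_simps)
  have "(m + n) mod (p * p) = (m + n) mod p + p * ((m + n) div p mod p)"
    by (simp only: mod_mult2_eq add.commute)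
  then have high: "(m + n) mod p\<^sup>2 div p = (m div p + n div p + c) mod p"
    using assms by (simp add: power2_eq_square div_add1_eq[of m n p] c_def)
  have "[a * (m div p + n div p + c) = a * (m div p) mod p + a * (n div p) mod p + a * c] (mod p)"
    unfolding distrib_left by (intro cong_add cong_refl) (simp_all add: cong_def)
  then have first: "a * ((m + n) mod p\<^sup>2 div p) mod p = (a * (m div p) mod p + a * (n div p) mod p + a * c) mod p"
    unfolding high cong_def by (simp add: mod_mult_right_eq)
  show ?thesis
    using assms by (simp add: Nmu_embed_def Nmu_mult low first c_def)
qed

(* For a coprime to p the high digit is recovered, so the embedding is injective. *)
lemma Nmu_embed_inj:
  assumes p: "prime p" and a: "0 < a" "a < p"
  shows "inj_on (Nmu_embed p a) {..<p\<^sup>2}"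
proof (rule inj_onI)
  fix m n assume m: "m \<in> {..<p\<^sup>2}" and n: "n \<in> {..<p\<^sup>2}"
    and eq: "Nmu_embed p a m = Nmu_embed p a n"
  have "coprime a p"
    using p a by (metis coprime_commute dvd_imp_le not_le prime_imp_coprime)
  then have "[m div p = n div p] (mod p)"
    using eq by (simp add: Nmu_embed_def cong_def[symmetric] cong_mult_lcancel_nat)
  moreover have "m div p < p" "n div p < p"
    using m n p by (simp_all add: power2_eq_square div_less_iff_less_mult prime_gt_0_nat)
  ultimately have "m div p = n div p" by (simp add: cong_def)
  moreover have "m mod p = n mod p" using eq by (simp add: Nmu_embed_def)
  ultimately show "m = n" by (metis div_mult_mod_eq)
qed

lemma Nmu_iso_cyclic:
  assumes p: "prime p" and a: "0 < a" "a < p"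
  shows "Nmu_group p a b \<cong> integer_mod_group (p\<^sup>2)"
proof (rule iso_of_injective_hom)
  define h where "h = (\<lambda>n :: int. Nmu_embed p a (nat n))"
  have p1: "1 < p" using p prime_gt_1_nat by blast
  have carrier: "carrier (integer_mod_group (p\<^sup>2)) = {0..<int (p\<^sup>2)}"
    using p1 by (simp add: carrier_integer_mod_group)
  show "group (integer_mod_group (p\<^sup>2))" by simp
  show "h \<in> hom (integer_mod_group (p\<^sup>2)) (Nmu_group p a b)"
  proof (rule homI)
    fix n assume "n \<in> carrier (integer_mod_group (p\<^sup>2))"
    show "h n \<in> carrier (Nmu_group p a b)"
      using p1 by (simp add: h_def Nmu_embed_def Nmu_group_def Nmu_eq)
  next
    fix m n assume "m \<in> carrier (integer_mod_group (p\<^sup>2))" "n \<in> carrier (integer_mod_group (p\<^sup>2))"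
    then have "nat ((m + n) mod int (p\<^sup>2)) = (nat m + nat n) mod p\<^sup>2"
      by (simp add: carrier nat_mod_distrib nat_add_distrib nat_power_eq)
    then show "h (m \<otimes>\<^bsub>integer_mod_group (p\<^sup>2)\<^esub> n) = h m \<otimes>\<^bsub>Nmu_group p a b\<^esub> h n"
      using p1 by (simp add: h_def Nmu_group_def Nmu_embed_add)
  qed
  show "inj_on h (carrier (integer_mod_group (p\<^sup>2)))"
  proof (rule inj_onI)
    fix m n assume "m \<in> carrier (integer_mod_group (p\<^sup>2))" "n \<in> carrier (integer_mod_group (p\<^sup>2))"
      and eq: "h m = h n"
    then have "nat m \<in> {..<p\<^sup>2}" "nat n \<in> {..<p\<^sup>2}" "0 \<le> m" "0 \<le> n"
      by (auto simp: carrier nat_less_iff simp del: of_nat_power)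
    moreover from this have "nat m = nat n"
      using Nmu_embed_inj[OF p a] eq unfolding inj_on_def h_def by blast
    ultimately show "m = n" by simp
  qed
  show "finite (carrier (Nmu_group p a b))"
    using card_Nmu[OF p1] p1 by (intro card_ge_0_finite) (simp add: Nmu_group_def)
  show "card (carrier (integer_mod_group (p\<^sup>2))) = card (carrier (Nmu_group p a b))"
    using p1 by (simp add: carrier Nmu_group_def card_Nmu del: of_nat_power)
qed

theorem lemma5p5:
  fixes p a b :: nat
  assumes "prime p" and "a < p" and "b < p"
  shows "((a = 0 \<and> b = 0) \<and> p \<noteq> 3 \<longrightarrow> Qexponent p a b = p)
       \<and> ((a \<noteq> 0 \<or> b \<noteq> 0) \<or> p = 3 \<longrightarrow> Qexponent p a b = p ^ 2)
       \<and> (a = 0 \<longrightarrow> Nmu_group p a b \<cong> integer_mod_group p \<times>\<times> integer_mod_group p)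
       \<and> (a \<noteq> 0 \<longrightarrow> Nmu_group p a b \<cong> integer_mod_group (p ^ 2))"
  using Qexponent_eq_p[OF assms(1)] Qexponent_eq_p_squared[OF assms]
    Nmu_iso_elementary[OF prime_gt_1_nat[OF assms(1)]] Nmu_iso_cyclic[OF assms(1) _ assms(2)]
  by auto
end
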